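(* Let $(\alpha,\beta)$ be a rigid elliptic structure on a domain $\Omega \subseteq \mathbb{R}^2$. Then $\alpha$, $\beta$, and the spectral parameter $\lambda$ are real-analytic on $\Omega$. In particular, if $(\alpha,\beta)$ is $C^k$ for some finite $k$ but not $C^\omega$ (real-analytic), then $(\alpha,\beta)$ is not rigid.
   Context: A variable elliptic structure on $\Omega\subseteq\mathbb{R}^2$ is a pair of real functions $(\alpha,\beta)$ with $\Delta = 4\alpha - \beta^2 > 0$; it determines a moving imaginary unit $i(x,y)$ satisfying $i^2+\beta i+\alpha=0$ and the spectral parameter $\lambda = (-\beta + i\sqrt{\Delta})/2 \in \mathbb{C}_+$ (so $\alpha=|\lambda|^2$, $\beta=-2\operatorname{Re}\lambda$). The structure is rigid if its intrinsic obstruction $G = i_x + i\cdot i_y$ vanishes; in that case the spectral parameter satisfies the conservative complex Burgers equation $\lambda_x + \lambda\lambda_y = 0$. *)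

theory Defs
  imports "HOL-Analysis.Analysis"
begin

definition domain2 :: "(real \<times> real) set \<Rightarrow> bool" where
  "domain2 \<Omega> \<longleftrightarrow> open \<Omega> \<and> connected \<Omega> \<and> \<Omega> \<noteq> {}"

definition pdx :: "(real \<times> real \<Rightarrow> 'a::real_normed_vector) \<Rightarrow> real \<times> real \<Rightarrow> 'a" where
  "pdx f p = vector_derivative (\<lambda>t. f (t, snd p)) (at (fst p))"

definition pdy :: "(real \<times> real \<Rightarrow> 'a::real_normed_vector) \<Rightarrow> real \<times> real \<Rightarrow> 'a" where
  "pdy f p = vector_derivative (\<lambda>t. f (fst p, t)) (at (snd p))"

definition C1_on :: "(real \<times> real) set \<Rightarrow> (real \<times> real \<Rightarrow> 'a::real_normed_vector) \<Rightarrow> bool" where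
  "C1_on \<Omega> f \<longleftrightarrow> f differentiable_on \<Omega> \<and> continuous_on \<Omega> (pdx f) \<and> continuous_on \<Omega> (pdy f)"

text \<open>Real-analyticity on the plane: near every point, f is the sum of an
  (unconditionally, i.e. absolutely) convergent double power series.\<close>
definition real_analytic_on2 :: "(real \<times> real) set \<Rightarrow> (real \<times> real \<Rightarrow> 'a::real_normed_vector) \<Rightarrow> bool" where
  "real_analytic_on2 \<Omega> f \<longleftrightarrow>
     (\<forall>p\<in>\<Omega>. \<exists>r>0. \<exists>c :: nat \<Rightarrow> nat \<Rightarrow> 'a.
        \<forall>q\<in>ball p r. ((\<lambda>(m,n). ((fst q - fst p) ^ m * (snd q - snd p) ^ n) *\<^sub>R c m n)
                        has_sum f q) UNIV)"

definition elliptic_structure :: "(real \<times> real) set \<Rightarrow> (real \<times> real \<Rightarrow> real) \<Rightarrow> (real \<times> real \<Rightarrow> real) \<Rightarrow> bool" where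
  "elliptic_structure \<Omega> \<alpha> \<beta> \<longleftrightarrow> (\<forall>p\<in>\<Omega>. 4 * \<alpha> p - (\<beta> p)^2 > 0)"

definition spectral_param :: "(real \<times> real \<Rightarrow> real) \<Rightarrow> (real \<times> real \<Rightarrow> real) \<Rightarrow> real \<times> real \<Rightarrow> complex" where
  "spectral_param \<alpha> \<beta> p = Complex (- \<beta> p / 2) (sqrt (4 * \<alpha> p - (\<beta> p)^2) / 2)"

text \<open>The moving imaginary unit i(x,y), the root of i^2 + \<beta> i + \<alpha> = 0, realised in C
  through the pointwise algebra isomorphism R[i]/(i^2+\<beta>i+\<alpha>) \<cong> C, i \<mapsto> \<lambda>(x,y).\<close>
definition moving_unit :: "(real \<times> real \<Rightarrow> real) \<Rightarrow> (real \<times> real \<Rightarrow> real) \<Rightarrow> real \<times> real \<Rightarrow> complex" where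
  "moving_unit \<alpha> \<beta> = spectral_param \<alpha> \<beta>"

definition obstruction :: "(real \<times> real \<Rightarrow> real) \<Rightarrow> (real \<times> real \<Rightarrow> real) \<Rightarrow> real \<times> real \<Rightarrow> complex" where
  "obstruction \<alpha> \<beta> p = pdx (moving_unit \<alpha> \<beta>) p + moving_unit \<alpha> \<beta> p * pdy (moving_unit \<alpha> \<beta>) p"

definition rigid_elliptic_structure :: "(real \<times> real) set \<Rightarrow> (real \<times> real \<Rightarrow> real) \<Rightarrow> (real \<times> real \<Rightarrow> real) \<Rightarrow> bool" where
  "rigid_elliptic_structure \<Omega> \<alpha> \<beta> \<longleftrightarrow>
     elliptic_structure \<Omega> \<alpha> \<beta> \<and> C1_on \<Omega> \<alpha> \<and> C1_on \<Omega> \<beta> \<and>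
     (\<forall>p\<in>\<Omega>. obstruction \<alpha> \<beta> p = 0)"

end

theory Submission
  imports Defs "HOL-Complex_Analysis.Complex_Analysis"
begin

text \<open>
  By the complex Burgers equation \<open>\<lambda>\<^sub>x + \<lambda> \<lambda>\<^sub>y = 0\<close>, \<open>\<lambda>\<close> is constant along the complex
  characteristics \<open>y - \<lambda> x = const\<close>.  Near \<open>(x\<^sub>0, y\<^sub>0)\<close> the characteristic coordinate
  \<open>x + i y \<mapsto> y - (x - x\<^sub>0) \<lambda>(x, y)\<close> has invertible differential (as \<open>Im \<lambda> > 0\<close>), hence is a local
  homeomorphism, and \<open>d\<lambda>\<close> is a complex multiple of its differential; so
  \<open>\<lambda>(x, y) = F (y - (x - x\<^sub>0) \<lambda>(x, y))\<close> with \<open>F\<close> holomorphic.  With \<open>u = x - x\<^sub>0\<close> and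
  \<open>s = y - y\<^sub>0\<close>, the point \<open>w = y - u \<lambda>\<close> is a root of \<open>\<zeta> - y\<^sub>0 - s + u F \<zeta>\<close>, and Cauchy's integral
  formula gives \<open>F w = (2 \<pi> i)\<^sup>-\<^sup>1 \<ointegral> F \<zeta> (1 + u F' \<zeta>) / (\<zeta> - y\<^sub>0 - s + u F \<zeta>) d\<zeta>\<close> over a small
  circle around \<open>y\<^sub>0\<close>.  Expanding the kernel as a geometric series in \<open>(s - u F \<zeta>) / (\<zeta> - y\<^sub>0)\<close>
  yields an absolutely convergent double power series for \<open>\<lambda>\<close> in \<open>(u, s)\<close>.  Finally
  \<open>\<beta> = -2 Re \<lambda>\<close> and \<open>\<alpha> = (Re \<lambda>)\<^sup>2 + (Im \<lambda>)\<^sup>2\<close>.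
\<close>

section \<open>Absolutely convergent double power series\<close>

lemma bij_betw_antidiagonal: "bij_betw (\<lambda>(m::nat, n::nat). (m + n, m)) UNIV (SIGMA k:UNIV. {..k})"
  by (rule bij_betwI[where g = "\<lambda>(k, m). (m, k - m)"]) auto

lemma binomial_double_series_summable:
  fixes X Y :: real
  assumes "X \<ge> 0" "Y \<ge> 0" "X + Y < 1"
  shows "(\<lambda>(m, n). real ((m + n) choose m) * X ^ m * Y ^ n) summable_on UNIV"
proof -
  let ?g = "\<lambda>(k::nat, m::nat). real (k choose m) * X ^ m * Y ^ (k - m)"
  have "?g summable_on (SIGMA k:UNIV. {..k})"
  proof (rule summable_on_SigmaI)
    show "((\<lambda>m. ?g (k, m)) has_sum (X + Y) ^ k) {..k}" for k
      by (subst binomial_ring) (auto intro: has_sum_finite)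
    show "(\<lambda>k. (X + Y) ^ k) summable_on UNIV"
      using assms by (intro summable_nonneg_imp_summable_on summable_geometric) auto
    show "?g (k, m) \<ge> 0" for k m
      using assms by auto
  qed
  then show ?thesis
    using summable_on_reindex_bij_betw[OF bij_betw_antidiagonal, of ?g]
    by (simp add: case_prod_unfold)
qed

lemma has_sum_imp_antidiagonal_sums:
  fixes T :: "nat \<times> nat \<Rightarrow> 'a::banach"
  assumes "(T has_sum S) UNIV"
  shows "(\<lambda>k. \<Sum>m\<le>k. T (m, k - m)) sums S"
proof -
  have "((\<lambda>(k, m). T (m, k - m)) has_sum S) (SIGMA k:UNIV. {..k})"
    using assms has_sum_reindex_bij_betw[OF bij_betw_antidiagonal, of "\<lambda>(k, m). T (m, k - m)" S]
    by (simp add: case_prod_unfold)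
  then have "((\<lambda>k. \<Sum>m\<le>k. T (m, k - m)) has_sum S) UNIV"
    by (rule has_sum_SigmaD) (auto intro: has_sum_finite)
  then show ?thesis
    by (rule has_sum_imp_sums)
qed

lemma has_sum_regroup_rectangles:
  fixes P :: "(nat \<times> nat) \<times> (nat \<times> nat) \<Rightarrow> 'a::{topological_comm_monoid_add, t3_space}"
  assumes "(P has_sum S) UNIV"
  shows "((\<lambda>(m, n). \<Sum>(i, j)\<in>{..m} \<times> {..n}. P ((i, j), (m - i, n - j))) has_sum S) UNIV"
proof -
  let ?T = "SIGMA mn:(UNIV::(nat \<times> nat) set). {..fst mn} \<times> {..snd mn}"
  let ?i = "\<lambda>(mn::nat \<times> nat, ij::nat \<times> nat). (ij, (fst mn - fst ij, snd mn - snd ij))"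
  let ?j = "\<lambda>(ij::nat \<times> nat, kl::nat \<times> nat). ((fst ij + fst kl, snd ij + snd kl), ij)"
  have "(P has_sum S) UNIV = ((P \<circ> ?i) has_sum S) ?T"
    by (rule has_sum_reindex_bij_witness[where i = ?i and j = ?j]) auto
  with assms have "((P \<circ> ?i) has_sum S) ?T"
    by simp
  then show ?thesis
    by (rule has_sum_SigmaD) (auto intro!: has_sum_finite simp: case_prod_unfold)
qed

definition power_series2_abs_sums ::
    "(nat \<Rightarrow> nat \<Rightarrow> 'a::real_normed_vector) \<Rightarrow> real \<Rightarrow> real \<Rightarrow> 'a \<Rightarrow> bool" where
  "power_series2_abs_sums c u s S \<longleftrightarrow>
     ((\<lambda>(m, n). (u ^ m * s ^ n) *\<^sub>R c m n) has_sum S) UNIV \<and>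
     (\<lambda>(m, n). norm ((u ^ m * s ^ n) *\<^sub>R c m n)) summable_on UNIV"

lemma power_series2_abs_sums_bounded_linear:
  assumes L: "bounded_linear L" and S: "power_series2_abs_sums c u s A"
  shows "power_series2_abs_sums (\<lambda>m n. L (c m n)) u s (L A)"
proof -
  interpret bounded_linear L by (rule L)
  obtain K where K: "\<And>x. norm (L x) \<le> norm x * K" using pos_bounded by blast
  let ?t = "\<lambda>(m, n). (u ^ m * s ^ n) *\<^sub>R c m n"
  have "((\<lambda>x. L (?t x)) has_sum L A) UNIV"
    using S unfolding power_series2_abs_sums_def by (intro has_sum_bounded_linear[OF L]) auto
  moreover have "(\<lambda>x. norm (L (?t x))) summable_on UNIV"
  proof (rule summable_on_comparison_test)
    show "(\<lambda>x. norm (?t x) * K) summable_on UNIV"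
      using S unfolding power_series2_abs_sums_def
      by (intro summable_on_cmult_left) (simp add: case_prod_unfold)
  qed (use K in auto)
  ultimately show ?thesis
    unfolding power_series2_abs_sums_def by (simp add: case_prod_unfold scaleR)
qed

lemma power_series2_abs_sums_add:
  assumes "power_series2_abs_sums a u s A" "power_series2_abs_sums b u s B"
  shows "power_series2_abs_sums (\<lambda>m n. a m n + b m n) u s (A + B)"
proof -
  let ?ta = "\<lambda>(m, n). (u ^ m * s ^ n) *\<^sub>R a m n" and ?tb = "\<lambda>(m, n). (u ^ m * s ^ n) *\<^sub>R b m n"
  have "((\<lambda>x. ?ta x + ?tb x) has_sum A + B) UNIV"
    using assms unfolding power_series2_abs_sums_def by (intro has_sum_add) auto
  moreover have "(\<lambda>x. norm (?ta x + ?tb x)) summable_on UNIV"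
  proof (rule summable_on_comparison_test)
    show "(\<lambda>x. norm (?ta x) + norm (?tb x)) summable_on UNIV"
      using assms unfolding power_series2_abs_sums_def
      by (intro summable_on_add) (simp_all add: case_prod_unfold)
  qed (auto intro: norm_triangle_ineq)
  ultimately show ?thesis
    unfolding power_series2_abs_sums_def by (simp add: case_prod_unfold scaleR_right_distrib)
qed

lemma has_sum_shift_first_index:
  fixes f :: "nat \<times> nat \<Rightarrow> 'a::{comm_monoid_add, topological_space}"
  assumes "(f has_sum S) UNIV"
  shows "((\<lambda>(m, n). if m = 0 then 0 else f (m - 1, n)) has_sum S) UNIV"
proof -
  let ?g = "\<lambda>(m, n). if m = 0 then 0 else f (m - 1, n)"
  have inj: "inj (\<lambda>(m::nat, n::nat). (Suc m, n))"
    by (auto simp: inj_on_def)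
  have range: "range (\<lambda>(m::nat, n::nat). (Suc m, n)) = {x. fst x \<noteq> 0}"
    by (auto simp: image_iff) (metis Suc_pred prod.collapse)
  have "(?g has_sum S) {x. fst x \<noteq> 0}"
    using assms has_sum_reindex[OF inj, of ?g S] range by (simp add: o_def case_prod_unfold)
  then show ?thesis
    by (rule has_sum_cong_neutral[THEN iffD1, rotated -1]) (auto simp: case_prod_unfold)
qed

lemma power_series2_abs_sums_shift:
  assumes "power_series2_abs_sums c u s A"
  shows "power_series2_abs_sums (\<lambda>m n. if m = 0 then 0 else c (m - 1) n) u s (u *\<^sub>R A)"
proof -
  let ?t = "\<lambda>(m, n). (u ^ m * s ^ n) *\<^sub>R c m n"
  have shifted_term: "(u ^ m * s ^ n) *\<^sub>R (if m = 0 then 0 else c (m - 1) n) =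
      (if m = 0 then 0 else u *\<^sub>R ?t (m - 1, n))" for m n
    by (cases m) (simp_all add: mult.assoc)
  have "((\<lambda>x. u *\<^sub>R ?t x) has_sum u *\<^sub>R A) UNIV"
    using assms unfolding power_series2_abs_sums_def by (intro has_sum_scaleR) auto
  from has_sum_shift_first_index[OF this]
  have "((\<lambda>(m, n). (u ^ m * s ^ n) *\<^sub>R (if m = 0 then 0 else c (m - 1) n)) has_sum u *\<^sub>R A) UNIV"
    by (simp only: shifted_term)
  moreover have "(\<lambda>x. norm (u *\<^sub>R ?t x)) summable_on UNIV"
    using assms unfolding power_series2_abs_sums_def norm_scaleR
    by (intro summable_on_cmult_right) (simp add: case_prod_unfold)
  from has_sum_imp_summable[OF has_sum_shift_first_index[OF has_sum_infsum[OF this]]]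
  have "(\<lambda>(m, n). norm ((u ^ m * s ^ n) *\<^sub>R (if m = 0 then 0 else c (m - 1) n))) summable_on UNIV"
    by (simp only: shifted_term if_distrib[of norm] norm_zero)
  ultimately show ?thesis
    unfolding power_series2_abs_sums_def by blast
qed

lemma has_sum_product_abs_summable:
  fixes f g :: "'i \<Rightarrow> 'a::{real_normed_algebra, banach}"
  assumes f: "(f has_sum A) UNIV" "(\<lambda>x. norm (f x)) summable_on UNIV"
    and g: "(g has_sum B) UNIV" "(\<lambda>y. norm (g y)) summable_on UNIV"
  shows "((\<lambda>(x, y). f x * g y) has_sum A * B) UNIV" "(\<lambda>(x, y). norm (f x * g y)) summable_on UNIV"
proof -
  have "(\<lambda>(x, y). norm (f x) * norm (g y)) summable_on (SIGMA x:UNIV. UNIV)"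
    by (rule summable_on_SigmaI[where g = "\<lambda>x. norm (f x) * infsum (\<lambda>y. norm (g y)) UNIV"])
      (use f g in \<open>auto intro: has_sum_cmult_right has_sum_infsum summable_on_cmult_left\<close>)
  then have "(\<lambda>(x, y). norm (f x) * norm (g y)) summable_on UNIV"
    by simp
  then show abs: "(\<lambda>(x, y). norm (f x * g y)) summable_on UNIV"
    by (rule summable_on_comparison_test) (auto simp: norm_mult_ineq)
  have "((\<lambda>(x, y). f x * g y) has_sum A * B) (SIGMA x:UNIV. UNIV)"
  proof (rule has_sum_SigmaI)
    show "((\<lambda>y. (\<lambda>(x, y). f x * g y) (x, y)) has_sum f x * B) UNIV" for x
      using g(1) by (auto intro: has_sum_cmult_right)
    show "((\<lambda>x. f x * B) has_sum A * B) UNIV"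
      using f(1) by (rule has_sum_cmult_left)
    have "(\<lambda>xy. norm ((\<lambda>(x, y). f x * g y) xy)) summable_on UNIV"
      using abs by (simp add: case_prod_unfold)
    from abs_summable_summable[OF this]
    show "(\<lambda>(x, y). f x * g y) summable_on (SIGMA x:UNIV. UNIV)"
      by simp
  qed
  then show "((\<lambda>(x, y). f x * g y) has_sum A * B) UNIV"
    by simp
qed

lemma power_series2_abs_sums_mult:
  fixes a b :: "nat \<Rightarrow> nat \<Rightarrow> 'a::{real_normed_algebra, banach}"
  assumes A: "power_series2_abs_sums a u s A" and B: "power_series2_abs_sums b u s B"
  shows "power_series2_abs_sums (\<lambda>m n. \<Sum>i\<le>m. \<Sum>j\<le>n. a i j * b (m - i) (n - j)) u s (A * B)"
proof -
  define f where "f x = (u ^ fst x * s ^ snd x) *\<^sub>R a (fst x) (snd x)" for x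
  define g where "g x = (u ^ fst x * s ^ snd x) *\<^sub>R b (fst x) (snd x)" for x
  define P where "P = (\<lambda>(x, y). f x * g y)"
  have "(f has_sum A) UNIV" "(\<lambda>x. norm (f x)) summable_on UNIV"
    "(g has_sum B) UNIV" "(\<lambda>x. norm (g x)) summable_on UNIV"
    using A B unfolding power_series2_abs_sums_def f_def g_def by (simp_all add: case_prod_unfold)
  from has_sum_product_abs_summable[OF this]
  have PS: "(P has_sum A * B) UNIV" and Pn: "(\<lambda>xy. norm (P xy)) summable_on UNIV"
    unfolding P_def by (simp_all add: case_prod_unfold)
  have product_term: "(u ^ m * s ^ n) *\<^sub>R (\<Sum>i\<le>m. \<Sum>j\<le>n. a i j * b (m - i) (n - j)) =
      (\<Sum>(i, j)\<in>{..m} \<times> {..n}. P ((i, j), (m - i, n - j)))" for m n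
  proof -
    have "P ((i, j), (m - i, n - j)) = (u ^ m * s ^ n) *\<^sub>R (a i j * b (m - i) (n - j))"
      if "i \<le> m" "j \<le> n" for i j
    proof -
      have "u ^ m = u ^ i * u ^ (m - i)" "s ^ n = s ^ j * s ^ (n - j)"
        using that by (simp_all flip: power_add)
      then show ?thesis
        by (simp add: P_def f_def g_def mult_ac)
    qed
    then show ?thesis
      by (auto simp: sum.cartesian_product scaleR_sum_right intro!: sum.cong)
  qed
  have "((\<lambda>(m, n). (u ^ m * s ^ n) *\<^sub>R (\<Sum>i\<le>m. \<Sum>j\<le>n. a i j * b (m - i) (n - j))) has_sum A * B) UNIV"
    using has_sum_regroup_rectangles[OF PS] by (simp add: product_term)
  moreover have "(\<lambda>(m, n). norm ((u ^ m * s ^ n) *\<^sub>R (\<Sum>i\<le>m. \<Sum>j\<le>n. a i j * b (m - i) (n - j)))) summable_on UNIV"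
  proof (rule summable_on_comparison_test)
    show "(\<lambda>(m, n). \<Sum>(i, j)\<in>{..m} \<times> {..n}. norm (P ((i, j), (m - i, n - j)))) summable_on UNIV"
      using has_sum_regroup_rectangles[OF has_sum_infsum[OF Pn]] by (rule has_sum_imp_summable)
  qed (auto simp: product_term norm_sum case_prod_unfold)
  ultimately show ?thesis
    unfolding power_series2_abs_sums_def by blast
qed

definition abs_real_analytic_on2 :: "(real \<times> real) set \<Rightarrow> (real \<times> real \<Rightarrow> 'a::real_normed_vector) \<Rightarrow> bool" where
  "abs_real_analytic_on2 \<Omega> f \<longleftrightarrow> (\<forall>p\<in>\<Omega>. \<exists>r>0. ball p r \<subseteq> \<Omega> \<and>
     (\<exists>c. \<forall>q\<in>ball p r. power_series2_abs_sums c (fst q - fst p) (snd q - snd p) (f q)))"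

lemma abs_real_analytic_on2_imp_real_analytic_on2:
  "abs_real_analytic_on2 \<Omega> f \<Longrightarrow> real_analytic_on2 \<Omega> f"
  unfolding abs_real_analytic_on2_def real_analytic_on2_def power_series2_abs_sums_def by blast

lemma abs_real_analytic_on2_cong:
  assumes "abs_real_analytic_on2 \<Omega> f" "\<And>q. q \<in> \<Omega> \<Longrightarrow> f q = g q"
  shows "abs_real_analytic_on2 \<Omega> g"
  using assms unfolding abs_real_analytic_on2_def by (metis subsetD)

lemma abs_real_analytic_on2_bounded_linear:
  "bounded_linear L \<Longrightarrow> abs_real_analytic_on2 \<Omega> f \<Longrightarrow> abs_real_analytic_on2 \<Omega> (\<lambda>q. L (f q))"
  unfolding abs_real_analytic_on2_def by (blast intro: power_series2_abs_sums_bounded_linear)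

lemma abs_real_analytic_on2_binop:
  assumes f: "abs_real_analytic_on2 \<Omega> f" and g: "abs_real_analytic_on2 \<Omega> g"
    and series: "\<And>a b u s A B. power_series2_abs_sums a u s A \<Longrightarrow> power_series2_abs_sums b u s B \<Longrightarrow>
      power_series2_abs_sums (h a b) u s (\<phi> A B)"
  shows "abs_real_analytic_on2 \<Omega> (\<lambda>q. \<phi> (f q) (g q))"
  unfolding abs_real_analytic_on2_def
proof
  fix p assume "p \<in> \<Omega>"
  then obtain r1 r2 a b where "r1 > 0" "ball p r1 \<subseteq> \<Omega>" "r2 > 0" "ball p r2 \<subseteq> \<Omega>"
    "\<forall>q\<in>ball p r1. power_series2_abs_sums a (fst q - fst p) (snd q - snd p) (f q)"
    "\<forall>q\<in>ball p r2. power_series2_abs_sums b (fst q - fst p) (snd q - snd p) (g q)"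
    using f g unfolding abs_real_analytic_on2_def by meson
  then show "\<exists>r>0. ball p r \<subseteq> \<Omega> \<and>
      (\<exists>c. \<forall>q\<in>ball p r. power_series2_abs_sums c (fst q - fst p) (snd q - snd p) (\<phi> (f q) (g q)))"
    by (intro exI[of _ "min r1 r2"] conjI exI[of _ "h a b"] ballI series) auto
qed

lemma abs_real_analytic_on2_add:
  assumes "abs_real_analytic_on2 \<Omega> f" "abs_real_analytic_on2 \<Omega> g"
  shows "abs_real_analytic_on2 \<Omega> (\<lambda>q. f q + g q)"
  using assms power_series2_abs_sums_add by (rule abs_real_analytic_on2_binop[where \<phi> = "(+)"])

lemma abs_real_analytic_on2_mult:
  fixes f g :: "real \<times> real \<Rightarrow> 'a::{real_normed_algebra, banach}"
  assumes "abs_real_analytic_on2 \<Omega> f" "abs_real_analytic_on2 \<Omega> g"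
  shows "abs_real_analytic_on2 \<Omega> (\<lambda>q. f q * g q)"
  using assms power_series2_abs_sums_mult by (rule abs_real_analytic_on2_binop[where \<phi> = "(*)"])


section \<open>Expansion of perturbed Cauchy integrals\<close>

lemma sums_inverse_diff:
  fixes t w :: "'a::{real_normed_field, banach}"
  assumes "norm t < norm w"
  shows "(\<lambda>k. t ^ k / w ^ Suc k) sums (1 / (w - t))"
proof -
  have w: "w \<noteq> 0" and wt: "w - t \<noteq> 0"
    using assms by auto
  have "(\<lambda>k. (t / w) ^ k) sums (1 / (1 - t / w))"
    using assms w by (intro geometric_sums) (simp add: norm_divide)
  from sums_divide[OF this, of w] have "(\<lambda>k. (t / w) ^ k / w) sums (1 / (1 - t / w) / w)" .
  moreover have "1 / (1 - t / w) / w = 1 / (w - t)"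
    using w wt by (simp add: field_simps)
  ultimately show ?thesis
    by (simp add: power_divide mult.commute)
qed

lemma contour_integral_sums_circlepath:
  fixes f :: "nat \<Rightarrow> complex \<Rightarrow> complex"
  assumes r: "r > 0" and cont: "\<And>k. continuous_on (sphere c r) (f k)"
    and bound: "\<And>k z. z \<in> sphere c r \<Longrightarrow> norm (f k z) \<le> M k" and M: "summable M"
    and sums: "\<And>z. z \<in> sphere c r \<Longrightarrow> (\<lambda>k. f k z) sums g z"
  shows "(\<lambda>k. contour_integral (circlepath c r) (f k)) sums contour_integral (circlepath c r) g"
proof -
  have int: "f k contour_integrable_on (circlepath c r)" for k
    using cont r by (intro contour_integrable_continuous_circlepath) simp
  have "uniform_limit (sphere c r) (\<lambda>N z. \<Sum>k<N. f k z) (\<lambda>z. \<Sum>k. f k z) sequentially"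
    using bound M by (rule Weierstrass_m_test) auto
  then have "(\<lambda>N. contour_integral (circlepath c r) (\<lambda>z. \<Sum>k<N. f k z)) \<longlonglongrightarrow>
      contour_integral (circlepath c r) (\<lambda>z. \<Sum>k. f k z)"
    using int r by (intro contour_integral_uniform_limit_circlepath(2))
      (auto intro!: always_eventually contour_integrable_sum)
  moreover have "contour_integral (circlepath c r) (\<lambda>z. \<Sum>k. f k z) = contour_integral (circlepath c r) g"
    using sums r by (intro contour_integral_eq) (auto simp: sums_iff)
  moreover have "contour_integral (circlepath c r) (\<lambda>z. \<Sum>k<N. f k z) =
      (\<Sum>k<N. contour_integral (circlepath c r) (f k))" for N
    using int by (intro contour_integral_sum) auto
  ultimately show ?thesis
    by (simp add: sums_def)
qed

text \<open>\<open>(-1)^m * ((m + n) choose m) * F \<zeta>^m / (\<zeta> - c)^(m + n + 1)\<close> is the coefficient of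
  \<open>u^m * s^n\<close> in the geometric expansion of \<open>1 / (\<zeta> - c - s + u F \<zeta>)\<close>.\<close>

definition perturbed_cauchy_coeff ::
    "(complex \<Rightarrow> complex) \<Rightarrow> (complex \<Rightarrow> complex) \<Rightarrow> complex \<Rightarrow> real \<Rightarrow> nat \<Rightarrow> nat \<Rightarrow> complex" where
  "perturbed_cauchy_coeff F h c r m n = of_nat ((m + n) choose m) * (-1) ^ m *
     contour_integral (circlepath c r) (\<lambda>\<zeta>. h \<zeta> * F \<zeta> ^ m / (\<zeta> - c) ^ (m + n + 1))"

lemma contour_integrable_power_div_circlepath:
  assumes "r > 0" "continuous_on (sphere c r) F" "continuous_on (sphere c r) h"
  shows "(\<lambda>\<zeta>. h \<zeta> * F \<zeta> ^ m / (\<zeta> - c) ^ j) contour_integrable_on (circlepath c r)"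
  using assms by (intro contour_integrable_continuous_circlepath continuous_intros) auto

lemma norm_perturbed_cauchy_coeff_le:
  assumes r: "r > 0" and cont: "continuous_on (sphere c r) F" "continuous_on (sphere c r) h"
    and FB: "\<And>z. z \<in> sphere c r \<Longrightarrow> norm (F z) \<le> B"
    and hH: "\<And>z. z \<in> sphere c r \<Longrightarrow> norm (h z) \<le> H" and "B \<ge> 0" "H \<ge> 0"
  shows "norm (perturbed_cauchy_coeff F h c r m n) \<le>
      2 * pi * H * real ((m + n) choose m) * B ^ m / r ^ (m + n)"
proof -
  have "norm (contour_integral (circlepath c r) (\<lambda>\<zeta>. h \<zeta> * F \<zeta> ^ m / (\<zeta> - c) ^ (m + n + 1)))
      \<le> (H * B ^ m / r ^ (m + n + 1)) * (2 * pi * r)"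
  proof (rule has_contour_integral_bound_circlepath[OF has_contour_integral_integral])
    show "(\<lambda>\<zeta>. h \<zeta> * F \<zeta> ^ m / (\<zeta> - c) ^ (m + n + 1)) contour_integrable_on circlepath c r"
      using r cont by (rule contour_integrable_power_div_circlepath)
    fix z assume zc: "norm (z - c) = r"
    then have z: "z \<in> sphere c r"
      by (simp add: dist_norm norm_minus_commute)
    have "norm ((z - c) ^ (m + n + 1)) = r ^ (m + n + 1)"
      using zc by (simp only: norm_power)
    then show "norm (h z * F z ^ m / (z - c) ^ (m + n + 1)) \<le> H * B ^ m / r ^ (m + n + 1)"
      using hH[OF z] FB[OF z] assms
      by (simp add: norm_mult norm_divide norm_power divide_right_mono mult_mono power_mono)
  qed (use assms in auto)
  also have "\<dots> = 2 * pi * H * B ^ m / r ^ (m + n)"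
    using r by (simp add: field_simps)
  finally have "norm (contour_integral (circlepath c r) (\<lambda>\<zeta>. h \<zeta> * F \<zeta> ^ m / (\<zeta> - c) ^ (m + n + 1)))
      \<le> 2 * pi * H * B ^ m / r ^ (m + n)" .
  from mult_left_mono[OF this, of "real ((m + n) choose m)"] show ?thesis
    unfolding perturbed_cauchy_coeff_def by (simp add: norm_mult norm_power mult_ac)
qed

lemma contour_integral_perturbed_cauchy_term:
  assumes r: "r > 0" and cont: "continuous_on (sphere c r) F" "continuous_on (sphere c r) h"
  shows "contour_integral (circlepath c r) (\<lambda>\<zeta>. h \<zeta> * (of_real s - of_real u * F \<zeta>) ^ k / (\<zeta> - c) ^ Suc k)
      = (\<Sum>m\<le>k. (u ^ m * s ^ (k - m)) *\<^sub>R perturbed_cauchy_coeff F h c r m (k - m))"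
proof -
  define a :: "nat \<Rightarrow> complex" where "a m = of_real (u ^ m * s ^ (k - m)) * of_nat (k choose m) * (-1) ^ m" for m
  define g where "g m = (\<lambda>\<zeta>. h \<zeta> * F \<zeta> ^ m / (\<zeta> - c) ^ (m + (k - m) + 1))" for m
  have int: "g m contour_integrable_on (circlepath c r)" for m
    unfolding g_def using r cont by (rule contour_integrable_power_div_circlepath)
  have "h \<zeta> * (of_real s - of_real u * F \<zeta>) ^ k / (\<zeta> - c) ^ Suc k = (\<Sum>m\<le>k. a m * g m \<zeta>)" for \<zeta>
  proof -
    have "(of_real s - of_real u * F \<zeta>) ^ k =
        (\<Sum>m\<le>k. of_nat (k choose m) * (- (of_real u * F \<zeta>)) ^ m * of_real s ^ (k - m))"
      using binomial_ring[of "- (of_real u * F \<zeta>)" "of_real s" k] by simp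
    then have "h \<zeta> * (of_real s - of_real u * F \<zeta>) ^ k / (\<zeta> - c) ^ Suc k =
        (\<Sum>m\<le>k. h \<zeta> * (of_nat (k choose m) * (- (of_real u * F \<zeta>)) ^ m * of_real s ^ (k - m)) /
          (\<zeta> - c) ^ Suc k)"
      by (simp add: sum_distrib_left sum_divide_distrib)
    also have "\<dots> = (\<Sum>m\<le>k. a m * g m \<zeta>)"
    proof (intro sum.cong refl)
      fix m assume "m \<in> {..k}"
      moreover have "(- (of_real u * F \<zeta>)) ^ m = (-1) ^ m * of_real u ^ m * F \<zeta> ^ m"
        by (simp add: power_minus[of "of_real u * F \<zeta>"] power_mult_distrib)
      ultimately show "h \<zeta> * (of_nat (k choose m) * (- (of_real u * F \<zeta>)) ^ m * of_real s ^ (k - m)) /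
          (\<zeta> - c) ^ Suc k = a m * g m \<zeta>"
        by (simp add: a_def g_def mult_ac)
    qed
    finally show ?thesis .
  qed
  then have "contour_integral (circlepath c r) (\<lambda>\<zeta>. h \<zeta> * (of_real s - of_real u * F \<zeta>) ^ k / (\<zeta> - c) ^ Suc k)
      = (\<Sum>m\<le>k. a m * contour_integral (circlepath c r) (g m))"
    using int by (simp add: contour_integral_sum contour_integrable_lmul contour_integral_lmul)
  also have "\<dots> = (\<Sum>m\<le>k. (u ^ m * s ^ (k - m)) *\<^sub>R perturbed_cauchy_coeff F h c r m (k - m))"
    by (intro sum.cong refl) (simp add: a_def g_def perturbed_cauchy_coeff_def scaleR_conv_of_real mult_ac)
  finally show ?thesis .
qed

lemma perturbed_cauchy_denominator_nonzero:
  fixes F :: "complex \<Rightarrow> complex"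
  assumes "z \<in> sphere c r" "norm (F z) \<le> B" "\<bar>u\<bar> * B + \<bar>s\<bar> < r"
  shows "z - c - of_real s + of_real u * F z \<noteq> 0"
proof
  assume "z - c - of_real s + of_real u * F z = 0"
  then have "z - c = of_real s - of_real u * F z"
    by (simp add: algebra_simps)
  moreover have "norm (z - c) = r"
    using assms(1) by (simp add: dist_norm norm_minus_commute)
  ultimately have "r = norm (of_real s - of_real u * F z)"
    by simp
  also have "\<dots> \<le> \<bar>s\<bar> + \<bar>u\<bar> * norm (F z)"
    using norm_triangle_ineq4[of "of_real s" "of_real u * F z"] by (simp add: norm_mult)
  also have "\<dots> \<le> \<bar>s\<bar> + \<bar>u\<bar> * B"
    using assms(2) by (simp add: mult_left_mono)
  finally show False
    using assms(3) by simp
qed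

lemma perturbed_cauchy_series_abs_summable:
  assumes r: "r > 0" and cont: "continuous_on (sphere c r) F" "continuous_on (sphere c r) h"
    and FB: "\<And>z. z \<in> sphere c r \<Longrightarrow> norm (F z) \<le> B"
    and hH: "\<And>z. z \<in> sphere c r \<Longrightarrow> norm (h z) \<le> H" and B: "B \<ge> 0" and H: "H \<ge> 0"
    and small: "\<bar>u\<bar> * B + \<bar>s\<bar> < r"
  shows "(\<lambda>(m, n). norm ((u ^ m * s ^ n) *\<^sub>R perturbed_cauchy_coeff F h c r m n)) summable_on UNIV"
proof -
  define X where "X = \<bar>u\<bar> * B / r"
  define Y where "Y = \<bar>s\<bar> / r"
  have XY: "X \<ge> 0" "Y \<ge> 0" "X + Y < 1"
    using r B small by (auto simp: X_def Y_def field_simps)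
  have bound: "norm ((u ^ m * s ^ n) *\<^sub>R perturbed_cauchy_coeff F h c r m n) \<le>
      2 * pi * H * (real ((m + n) choose m) * X ^ m * Y ^ n)" for m n
  proof -
    have "norm ((u ^ m * s ^ n) *\<^sub>R perturbed_cauchy_coeff F h c r m n) \<le>
        \<bar>u\<bar> ^ m * \<bar>s\<bar> ^ n * (2 * pi * H * real ((m + n) choose m) * B ^ m / r ^ (m + n))"
      using mult_left_mono[OF norm_perturbed_cauchy_coeff_le[OF r cont FB hH B H], of "\<bar>u\<bar> ^ m * \<bar>s\<bar> ^ n" m n]
      by (simp add: abs_mult power_abs)
    also have "\<dots> = 2 * pi * H * (real ((m + n) choose m) * X ^ m * Y ^ n)"
      by (simp add: X_def Y_def power_divide power_mult_distrib power_add)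
    finally show ?thesis .
  qed
  have "(\<lambda>(m, n). 2 * pi * H * (real ((m + n) choose m) * X ^ m * Y ^ n)) summable_on UNIV"
    using summable_on_cmult_right[OF binomial_double_series_summable[OF XY], of "2 * pi * H"]
    by (simp add: case_prod_unfold mult.assoc)
  then show ?thesis
    by (rule summable_on_comparison_test) (use bound in \<open>auto split: prod.split\<close>)
qed

lemma contour_integral_perturbed_cauchy_sums:
  assumes r: "r > 0" and cont: "continuous_on (sphere c r) F" "continuous_on (sphere c r) h"
    and FB: "\<And>z. z \<in> sphere c r \<Longrightarrow> norm (F z) \<le> B"
    and hH: "\<And>z. z \<in> sphere c r \<Longrightarrow> norm (h z) \<le> H" and B: "B \<ge> 0" and H: "H \<ge> 0"
    and small: "\<bar>u\<bar> * B + \<bar>s\<bar> < r"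
  shows "(\<lambda>k. contour_integral (circlepath c r) (\<lambda>\<zeta>. h \<zeta> * (of_real s - of_real u * F \<zeta>) ^ k / (\<zeta> - c) ^ Suc k))
      sums contour_integral (circlepath c r) (\<lambda>\<zeta>. h \<zeta> / (\<zeta> - c - of_real s + of_real u * F \<zeta>))"
proof -
  define t where "t \<zeta> = of_real s - of_real u * F \<zeta>" for \<zeta>
  define q where "q = (\<bar>u\<bar> * B + \<bar>s\<bar>) / r"
  have t_bound: "norm (t \<zeta>) \<le> \<bar>u\<bar> * B + \<bar>s\<bar>" if "\<zeta> \<in> sphere c r" for \<zeta>
    unfolding t_def
    using norm_triangle_ineq4[of "of_real s" "of_real u * F \<zeta>"] mult_left_mono[OF FB[OF that] abs_ge_zero[of u]]
    by (simp add: norm_mult)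
  have "(\<lambda>k. contour_integral (circlepath c r) (\<lambda>\<zeta>. h \<zeta> * t \<zeta> ^ k / (\<zeta> - c) ^ Suc k))
      sums contour_integral (circlepath c r) (\<lambda>\<zeta>. h \<zeta> / (\<zeta> - c - of_real s + of_real u * F \<zeta>))"
  proof (rule contour_integral_sums_circlepath[OF r, where M = "\<lambda>k. H * q ^ k / r"])
    show "continuous_on (sphere c r) (\<lambda>\<zeta>. h \<zeta> * t \<zeta> ^ k / (\<zeta> - c) ^ Suc k)" for k
      unfolding t_def using cont r by (intro continuous_intros) auto
    show "summable (\<lambda>k. H * q ^ k / r)"
      using r B small by (intro summable_divide summable_mult summable_geometric) (simp add: q_def)
    fix \<zeta> assume \<zeta>: "\<zeta> \<in> sphere c r"
    then have norm_\<zeta>: "norm (\<zeta> - c) = r"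
      by (simp add: dist_norm norm_minus_commute)
    show "norm (h \<zeta> * t \<zeta> ^ k / (\<zeta> - c) ^ Suc k) \<le> H * q ^ k / r" for k
    proof -
      have "norm (h \<zeta> * t \<zeta> ^ k / (\<zeta> - c) ^ Suc k) = norm (h \<zeta>) * norm (t \<zeta>) ^ k / r ^ Suc k"
        using norm_\<zeta> by (simp add: norm_mult norm_divide norm_power)
      also have "\<dots> \<le> H * (\<bar>u\<bar> * B + \<bar>s\<bar>) ^ k / r ^ Suc k"
        using hH[OF \<zeta>] t_bound[OF \<zeta>] H r by (intro divide_right_mono mult_mono power_mono) auto
      also have "\<dots> = H * q ^ k / r"
        by (simp add: q_def power_divide)
      finally show ?thesis .
    qed
    have "norm (t \<zeta>) < norm (\<zeta> - c)"
      using t_bound[OF \<zeta>] small norm_\<zeta> by simp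
    from sums_mult[OF sums_inverse_diff[OF this], of "h \<zeta>"]
    have "(\<lambda>k. h \<zeta> * t \<zeta> ^ k / (\<zeta> - c) ^ Suc k) sums (h \<zeta> / (\<zeta> - c - t \<zeta>))"
      by (simp add: times_divide_eq_right)
    then show "(\<lambda>k. h \<zeta> * t \<zeta> ^ k / (\<zeta> - c) ^ Suc k) sums (h \<zeta> / (\<zeta> - c - of_real s + of_real u * F \<zeta>))"
      by (simp add: t_def diff_diff_eq2 diff_add_eq)
  qed
  then show ?thesis
    by (simp only: t_def)
qed

lemma power_series2_abs_sums_perturbed_cauchy:
  assumes r: "r > 0" and cont: "continuous_on (sphere c r) F" "continuous_on (sphere c r) h"
    and FB: "\<And>z. z \<in> sphere c r \<Longrightarrow> norm (F z) \<le> B"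
    and hH: "\<And>z. z \<in> sphere c r \<Longrightarrow> norm (h z) \<le> H" and B: "B \<ge> 0" and H: "H \<ge> 0"
    and small: "\<bar>u\<bar> * B + \<bar>s\<bar> < r"
  shows "power_series2_abs_sums (perturbed_cauchy_coeff F h c r) u s
      (contour_integral (circlepath c r) (\<lambda>\<zeta>. h \<zeta> / (\<zeta> - c - of_real s + of_real u * F \<zeta>)))"
proof -
  define T where "T = (\<lambda>(m, n). (u ^ m * s ^ n) *\<^sub>R perturbed_cauchy_coeff F h c r m n)"
  have T_abs: "(\<lambda>x. norm (T x)) summable_on UNIV"
    using perturbed_cauchy_series_abs_summable[OF assms] by (simp add: T_def case_prod_unfold)
  have T_sum: "(T has_sum infsum T UNIV) UNIV"
    using abs_summable_summable[OF T_abs] by (rule has_sum_infsum)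
  have "(\<lambda>k. contour_integral (circlepath c r) (\<lambda>\<zeta>. h \<zeta> * (of_real s - of_real u * F \<zeta>) ^ k / (\<zeta> - c) ^ Suc k))
      sums infsum T UNIV"
    using has_sum_imp_antidiagonal_sums[OF T_sum]
    by (simp only: T_def contour_integral_perturbed_cauchy_term[OF r cont] prod.case)
  with contour_integral_perturbed_cauchy_sums[OF assms]
  have "infsum T UNIV = contour_integral (circlepath c r) (\<lambda>\<zeta>. h \<zeta> / (\<zeta> - c - of_real s + of_real u * F \<zeta>))"
    by (rule sums_unique2[rotated])
  with T_sum T_abs show ?thesis
    unfolding power_series2_abs_sums_def T_def by (simp add: case_prod_unfold)
qed

lemma norm_difference_quotient_le:
  fixes F :: "complex \<Rightarrow> complex"
  assumes holF: "F holomorphic_on V" and V: "open V" "cball c r \<subseteq> V"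
    and dM: "\<And>w. w \<in> cball c r \<Longrightarrow> norm (deriv F w) \<le> M" and z: "z \<in> cball c r" and w: "w \<in> cball c r"
  shows "norm (if w = z then deriv F z else (F w - F z) / (w - z)) \<le> M"
proof (cases "w = z")
  case False
  have "norm (F w - F z) \<le> M * norm (w - z)"
  proof (rule field_differentiable_bound[OF convex_cball])
    show "(F has_field_derivative deriv F x) (at x within cball c r)" if "x \<in> cball c r" for x
      using holomorphic_derivI[OF holF V(1)] V(2) that by blast
  qed (use dM w z in auto)
  then show ?thesis
    using False by (simp add: norm_divide divide_le_eq)
qed (use dM z in simp)

lemma has_contour_integral_implicit_root:
  fixes F :: "complex \<Rightarrow> complex" and u s :: real
  assumes holF: "F holomorphic_on V" and V: "open V" "cball c r \<subseteq> V" and r: "r > 0"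
    and dM: "\<And>w. w \<in> cball c r \<Longrightarrow> norm (deriv F w) \<le> M" and uM: "\<bar>u\<bar> * M < 1"
    and z: "z \<in> ball c r" and root: "z - c - of_real s + of_real u * F z = 0"
  shows "((\<lambda>w. F w * (1 + of_real u * deriv F w) / (w - c - of_real s + of_real u * F w))
           has_contour_integral (2 * of_real pi * \<i> * F z)) (circlepath c r)"
proof -
  \<comment> \<open>The denominator factors as \<open>(w - z) * (1 + u * Q w)\<close> with \<open>Q\<close> the difference quotient of
    \<open>F\<close> at \<open>z\<close>; the second factor has no zeros, so Cauchy's integral formula applies.\<close>
  define Q where "Q w = (if w = z then deriv F z else (F w - F z) / (w - z))" for w
  have holQ: "Q holomorphic_on V"
    unfolding Q_def using holF V(1) by (rule pole_lemma_open)
  have zc: "z \<in> cball c r"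
    using z by auto
  have "norm (Q w) \<le> M" if "w \<in> cball c r" for w
    unfolding Q_def using holF V dM zc that by (rule norm_difference_quotient_le)
  then have nonzero: "1 + of_real u * Q w \<noteq> 0" if "w \<in> cball c r" for w
    using uM that norm_mult_ineq[of "of_real u" "Q w"] mult_left_mono[of "norm (Q w)" M "\<bar>u\<bar>"]
    by (auto simp: add_eq_0_iff)
  define \<phi> where "\<phi> w = F w * (1 + of_real u * deriv F w) / (1 + of_real u * Q w)" for w
  have holD: "deriv F holomorphic_on V"
    using holF V(1) by (rule holomorphic_deriv)
  have "\<phi> holomorphic_on ball c r"
    unfolding \<phi>_def using nonzero V(2)
    by (intro holomorphic_intros holomorphic_on_subset[OF holF] holomorphic_on_subset[OF holD]
        holomorphic_on_subset[OF holQ]) auto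
  moreover have "continuous_on (cball c r) \<phi>"
    unfolding \<phi>_def using nonzero V(2) holF holD holQ
    by (intro continuous_intros continuous_on_subset[OF holomorphic_on_imp_continuous_on]) auto
  moreover have "norm (z - c) < r"
    using z by (simp add: dist_norm norm_minus_commute)
  ultimately have "((\<lambda>w. \<phi> w / (w - z)) has_contour_integral (2 * of_real pi * \<i> * \<phi> z)) (circlepath c r)"
    by (intro Cauchy_integral_circlepath)
  moreover have "\<phi> z = F z"
    using nonzero[OF zc] by (simp add: \<phi>_def Q_def)
  ultimately have "((\<lambda>w. \<phi> w / (w - z)) has_contour_integral (2 * of_real pi * \<i> * F z)) (circlepath c r)"
    by simp
  then show ?thesis
  proof (rule has_contour_integral_eq)
    fix w assume "w \<in> path_image (circlepath c r)"
    then have w: "w \<in> cball c r" "w \<noteq> z"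
      using r z by auto
    then have "w - c - of_real s + of_real u * F w = (w - z) * (1 + of_real u * Q w)"
      using root by (simp add: Q_def field_simps)
    then show "\<phi> w / (w - z) = F w * (1 + of_real u * deriv F w) / (w - c - of_real s + of_real u * F w)"
      using w nonzero[OF w(1)] by (simp add: \<phi>_def)
  qed
qed

definition implicit_root_coeff :: "(complex \<Rightarrow> complex) \<Rightarrow> complex \<Rightarrow> real \<Rightarrow> nat \<Rightarrow> nat \<Rightarrow> complex" where
  "implicit_root_coeff F c r m n = (perturbed_cauchy_coeff F F c r m n +
     (if m = 0 then 0 else perturbed_cauchy_coeff F (\<lambda>w. F w * deriv F w) c r (m - 1) n)) / (2 * of_real pi * \<i>)"

lemma power_series2_abs_sums_implicit_root:
  fixes F :: "complex \<Rightarrow> complex" and u s :: real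
  assumes holF: "F holomorphic_on V" and V: "open V" "cball c r \<subseteq> V" and r: "r > 0"
    and FB: "\<And>w. w \<in> cball c r \<Longrightarrow> norm (F w) \<le> B" and B: "B \<ge> 0"
    and F'M: "\<And>w. w \<in> cball c r \<Longrightarrow> norm (deriv F w) \<le> M" and M: "M \<ge> 0"
    and uM: "\<bar>u\<bar> * M < 1" and small: "\<bar>u\<bar> * B + \<bar>s\<bar> < r"
    and w: "w \<in> ball c r" and root: "w - c - of_real s + of_real u * F w = 0"
  shows "power_series2_abs_sums (implicit_root_coeff F c r) u s (F w)"
proof -
  let ?den = "\<lambda>\<zeta>. \<zeta> - c - of_real s + of_real u * F \<zeta>"
  have sphere: "sphere c r \<subseteq> cball c r"
    by auto
  then have "sphere c r \<subseteq> V"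
    using V(2) by blast
  then have cont: "continuous_on (sphere c r) F" "continuous_on (sphere c r) (deriv F)"
    using holF holomorphic_deriv[OF holF V(1)]
    by (auto intro: continuous_on_subset[OF holomorphic_on_imp_continuous_on])
  have cont_product: "continuous_on (sphere c r) (\<lambda>\<zeta>. F \<zeta> * deriv F \<zeta>)"
    using cont by (rule continuous_on_mult)
  have bounds: "norm (F \<zeta>) \<le> B" "norm (F \<zeta> * deriv F \<zeta>) \<le> B * M" if "\<zeta> \<in> sphere c r" for \<zeta>
    using FB[of \<zeta>] F'M[of \<zeta>] that sphere B M by (auto simp: norm_mult intro: mult_mono)
  define K1 where "K1 = contour_integral (circlepath c r) (\<lambda>\<zeta>. F \<zeta> / ?den \<zeta>)"
  define K2 where "K2 = contour_integral (circlepath c r) (\<lambda>\<zeta>. F \<zeta> * deriv F \<zeta> / ?den \<zeta>)"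
  have S1: "power_series2_abs_sums (perturbed_cauchy_coeff F F c r) u s K1"
    unfolding K1_def using r cont(1) cont(1) bounds(1) bounds(1) B B small
    by (rule power_series2_abs_sums_perturbed_cauchy)
  have S2: "power_series2_abs_sums (perturbed_cauchy_coeff F (\<lambda>\<zeta>. F \<zeta> * deriv F \<zeta>) c r) u s K2"
    unfolding K2_def using r cont(1) cont_product bounds(1) bounds(2) B mult_nonneg_nonneg[OF B M] small
    by (rule power_series2_abs_sums_perturbed_cauchy)
  have "\<forall>\<zeta>\<in>sphere c r. ?den \<zeta> \<noteq> 0"
    using perturbed_cauchy_denominator_nonzero bounds(1) small by blast
  then have int: "(\<lambda>\<zeta>. F \<zeta> / ?den \<zeta>) contour_integrable_on circlepath c r"
    "(\<lambda>\<zeta>. F \<zeta> * deriv F \<zeta> / ?den \<zeta>) contour_integrable_on circlepath c r"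
    using r cont by (auto intro!: contour_integrable_continuous_circlepath continuous_intros)
  have "((\<lambda>\<zeta>. F \<zeta> * (1 + of_real u * deriv F \<zeta>) / ?den \<zeta>) has_contour_integral (2 * of_real pi * \<i> * F w))
      (circlepath c r)"
    using holF V r F'M uM w root by (rule has_contour_integral_implicit_root)
  moreover have "((\<lambda>\<zeta>. F \<zeta> * (1 + of_real u * deriv F \<zeta>) / ?den \<zeta>) has_contour_integral K1 + of_real u * K2)
      (circlepath c r)"
    unfolding K1_def K2_def
    using has_contour_integral_add[OF has_contour_integral_integral[OF int(1)]
        has_contour_integral_lmul[OF has_contour_integral_integral[OF int(2)], of "of_real u"]]
    by (simp add: ring_distribs add_divide_distrib mult_ac)
  ultimately have "F w = (K1 + u *\<^sub>R K2) / (2 * of_real pi * \<i>)"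
    by (auto simp: scaleR_conv_of_real field_simps dest: has_contour_integral_unique)
  then show ?thesis
    unfolding implicit_root_coeff_def
    using power_series2_abs_sums_bounded_linear[OF bounded_linear_divide
        power_series2_abs_sums_add[OF S1 power_series2_abs_sums_shift[OF S2]]] by simp
qed

lemma implicit_root_power_series:
  fixes F :: "complex \<Rightarrow> complex"
  assumes holF: "F holomorphic_on V" and V: "open V" "cball c r \<subseteq> V" and r: "r > 0"
  obtains \<rho> where "\<rho> > 0"
    "\<And>u s w. \<bar>u\<bar> < \<rho> \<Longrightarrow> \<bar>s\<bar> < \<rho> \<Longrightarrow> w \<in> ball c r \<Longrightarrow> w - c - of_real s + of_real u * F w = 0 \<Longrightarrow>
       power_series2_abs_sums (implicit_root_coeff F c r) u s (F w)"
proof -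
  have cont: "continuous_on (cball c r) F" "continuous_on (cball c r) (deriv F)"
    using holF holomorphic_deriv[OF holF V(1)] V(2)
    by (auto intro: continuous_on_subset[OF holomorphic_on_imp_continuous_on])
  obtain B where B: "\<And>w. w \<in> cball c r \<Longrightarrow> norm (F w) \<le> B"
    using compact_imp_bounded[OF compact_continuous_image[OF cont(1) compact_cball]] unfolding bounded_iff by blast
  obtain M where M: "\<And>w. w \<in> cball c r \<Longrightarrow> norm (deriv F w) \<le> M"
    using compact_imp_bounded[OF compact_continuous_image[OF cont(2) compact_cball]] unfolding bounded_iff by blast
  have B0: "B \<ge> 0" and M0: "M \<ge> 0"
    using B[of c] M[of c] r by (auto intro: order_trans[OF norm_ge_zero])
  define \<rho> where "\<rho> = min (1 / (M + 1)) (r / (2 * (B + 1)))"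
  show ?thesis
  proof
    show "\<rho> > 0"
      using r B0 M0 by (simp add: \<rho>_def)
    fix u s :: real and w
    assume u: "\<bar>u\<bar> < \<rho>" and s: "\<bar>s\<bar> < \<rho>"
    have "\<bar>u\<bar> * M < 1"
      using u M0 by (simp add: \<rho>_def field_simps) (smt (verit) mult_left_mono)
    moreover have "\<bar>u\<bar> * B + \<bar>s\<bar> < r"
      using u s B0 r by (simp add: \<rho>_def field_simps) (smt (verit) mult_left_mono)
    ultimately show "w \<in> ball c r \<Longrightarrow> w - c - of_real s + of_real u * F w = 0 \<Longrightarrow>
        power_series2_abs_sums (implicit_root_coeff F c r) u s (F w)"
      using power_series2_abs_sums_implicit_root[OF holF V r B B0 M M0] by blast
  qed
qed

section \<open>Partial derivatives\<close>

lemma pdx_pdy_has_derivative: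
  fixes f :: "real \<times> real \<Rightarrow> 'a::real_normed_vector"
  assumes D: "(f has_derivative D) (at p)"
  shows "pdx f p = D (1, 0)" "pdy f p = D (0, 1)"
proof -
  interpret D: bounded_linear D
    using D by (rule has_derivative_bounded_linear)
  have first: "((\<lambda>t. (t, snd p)) has_derivative (\<lambda>h. (h, 0))) (at (fst p))"
    by (auto intro!: derivative_eq_intros)
  have "((\<lambda>t. f (t, snd p)) has_derivative (\<lambda>h. D (h, 0))) (at (fst p))"
    using diff_chain_at[OF first, of f D] D by (simp add: o_def)
  then have "((\<lambda>t. f (t, snd p)) has_vector_derivative D (1, 0)) (at (fst p))"
    unfolding has_vector_derivative_def using D.scaleR[of _ "(1, 0)", symmetric] by simp
  then show "pdx f p = D (1, 0)"
    unfolding pdx_def by (rule vector_derivative_at)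
  have second: "((\<lambda>t. (fst p, t)) has_derivative (\<lambda>h. (0, h))) (at (snd p))"
    by (auto intro!: derivative_eq_intros)
  have "((\<lambda>t. f (fst p, t)) has_derivative (\<lambda>h. D (0, h))) (at (snd p))"
    using diff_chain_at[OF second, of f D] D by (simp add: o_def)
  then have "((\<lambda>t. f (fst p, t)) has_vector_derivative D (0, 1)) (at (snd p))"
    unfolding has_vector_derivative_def using D.scaleR[of _ "(0, 1)", symmetric] by simp
  then show "pdy f p = D (0, 1)"
    unfolding pdy_def by (rule vector_derivative_at)
qed

lemma has_derivative_pdx_pdy:
  fixes f :: "real \<times> real \<Rightarrow> 'a::real_normed_vector"
  assumes D: "(f has_derivative D) (at p)"
  shows "(f has_derivative (\<lambda>v. fst v *\<^sub>R pdx f p + snd v *\<^sub>R pdy f p)) (at p)"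
proof -
  interpret D: bounded_linear D
    using D by (rule has_derivative_bounded_linear)
  have "D = (\<lambda>v. fst v *\<^sub>R pdx f p + snd v *\<^sub>R pdy f p)"
  proof
    fix v :: "real \<times> real"
    show "D v = fst v *\<^sub>R pdx f p + snd v *\<^sub>R pdy f p"
      using D.add[of "(fst v, 0)" "(0, snd v)"] D.scaleR[of "fst v" "(1, 0)"] D.scaleR[of "snd v" "(0, 1)"]
      by (simp add: pdx_pdy_has_derivative[OF D])
  qed
  with D show ?thesis
    by simp
qed

lemma C1_on_has_derivative:
  fixes f :: "real \<times> real \<Rightarrow> 'a::real_normed_vector"
  assumes "C1_on \<Omega> f" "open \<Omega>" "p \<in> \<Omega>"
  shows "(f has_derivative (\<lambda>v. fst v *\<^sub>R pdx f p + snd v *\<^sub>R pdy f p)) (at p)"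
proof -
  have "f differentiable at p"
    using assms unfolding C1_on_def by (simp add: differentiable_on_eq_differentiable_at)
  then show ?thesis
    unfolding differentiable_def by (blast intro: has_derivative_pdx_pdy)
qed


section \<open>Rigid elliptic structures\<close>

lemma dist_Complex: "dist (Complex a b) (Complex c d) = dist (a, b) (c, d)"
  unfolding dist_Pair_Pair by (simp add: dist_norm cmod_def dist_real_def power2_abs)

lemma bounded_linear_Re_Im: "bounded_linear (\<lambda>z. (Re z, Im z))"
  by (intro bounded_linear_Pair bounded_linear_Re bounded_linear_Im)

definition char_form :: "complex \<Rightarrow> complex \<Rightarrow> complex" where
  "char_form l v = of_real (Im v) - of_real (Re v) * l"

definition char_form_inv :: "complex \<Rightarrow> complex \<Rightarrow> complex" where
  "char_form_inv l w = Complex (- Im w / Im l) (Re w - Re l * Im w / Im l)"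

lemma bounded_linear_char_form_inv: "bounded_linear (char_form_inv l)"
proof -
  have "linear (char_form_inv l)"
    by (rule linearI) (simp_all add: char_form_inv_def complex_eq_iff algebra_simps add_divide_distrib diff_divide_distrib)
  then show ?thesis
    by (simp add: linear_conv_bounded_linear)
qed

lemma char_form_inv_char_form: "Im l \<noteq> 0 \<Longrightarrow> char_form_inv l (char_form l v) = v"
  by (simp add: char_form_def char_form_inv_def complex_eq_iff field_simps)

lemma char_form_char_form_inv: "Im l \<noteq> 0 \<Longrightarrow> char_form l (char_form_inv l w) = w"
  by (simp add: char_form_def char_form_inv_def complex_eq_iff field_simps)

lemma onorm_char_form_diff_le:
  "onorm (\<lambda>v. a * char_form l v - a' * char_form l' v) \<le> norm (a - a') + norm (a * l - a' * l')"
proof (rule onorm_le)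
  fix v :: complex
  have "a * char_form l v - a' * char_form l' v = (a - a') * of_real (Im v) - (a * l - a' * l') * of_real (Re v)"
    by (simp add: char_form_def algebra_simps)
  also have "norm \<dots> \<le> norm (a - a') * \<bar>Im v\<bar> + norm (a * l - a' * l') * \<bar>Re v\<bar>"
    by (rule order_trans[OF norm_triangle_ineq4]) (simp add: norm_mult)
  also have "\<dots> \<le> (norm (a - a') + norm (a * l - a' * l')) * norm v"
    using abs_Im_le_cmod[of v] abs_Re_le_cmod[of v]
    by (simp add: distrib_right add_mono mult_left_mono)
  finally show "norm (a * char_form l v - a' * char_form l' v) \<le> (norm (a - a') + norm (a * l - a' * l')) * norm v" .
qed

locale rigid_structure =
  fixes \<Omega> :: "(real \<times> real) set" and \<alpha> \<beta> :: "real \<times> real \<Rightarrow> real"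
  assumes open_domain: "open \<Omega>" and rigid: "rigid_elliptic_structure \<Omega> \<alpha> \<beta>"
begin

abbreviation lam :: "real \<times> real \<Rightarrow> complex" where
  "lam \<equiv> spectral_param \<alpha> \<beta>"

abbreviation \<Delta> :: "real \<times> real \<Rightarrow> real" where
  "\<Delta> q \<equiv> 4 * \<alpha> q - (\<beta> q)\<^sup>2"

lemma discriminant_pos: "q \<in> \<Omega> \<Longrightarrow> \<Delta> q > 0"
  using rigid unfolding rigid_elliptic_structure_def elliptic_structure_def by auto

lemma C1_on_coefficients: "C1_on \<Omega> \<alpha>" "C1_on \<Omega> \<beta>"
  using rigid unfolding rigid_elliptic_structure_def by auto

lemma lam_eq: "lam q = of_real (- \<beta> q / 2) + \<i> * of_real (sqrt (\<Delta> q) / 2)"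
  by (simp add: spectral_param_def Complex_eq)

definition lam_x :: "real \<times> real \<Rightarrow> complex" where
  "lam_x q = of_real (- pdx \<beta> q / 2) +
     \<i> * of_real ((4 * pdx \<alpha> q - 2 * \<beta> q * pdx \<beta> q) / (4 * sqrt (\<Delta> q)))"

definition lam_y :: "real \<times> real \<Rightarrow> complex" where
  "lam_y q = of_real (- pdy \<beta> q / 2) +
     \<i> * of_real ((4 * pdy \<alpha> q - 2 * \<beta> q * pdy \<beta> q) / (4 * sqrt (\<Delta> q)))"

lemma has_derivative_lam_partials:
  assumes q: "q \<in> \<Omega>"
  shows "(lam has_derivative (\<lambda>v. fst v *\<^sub>R lam_x q + snd v *\<^sub>R lam_y q)) (at q)"
proof -
  let ?d\<alpha> = "\<lambda>v. fst v * pdx \<alpha> q + snd v * pdy \<alpha> q"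
  let ?d\<beta> = "\<lambda>v. fst v * pdx \<beta> q + snd v * pdy \<beta> q"
  have d\<alpha>: "(\<alpha> has_derivative ?d\<alpha>) (at q)" and d\<beta>: "(\<beta> has_derivative ?d\<beta>) (at q)"
    using C1_on_has_derivative[OF C1_on_coefficients(1) open_domain q]
      C1_on_has_derivative[OF C1_on_coefficients(2) open_domain q] by simp_all
  have "(\<Delta> has_derivative (\<lambda>v. 4 * ?d\<alpha> v - 2 * \<beta> q * ?d\<beta> v)) (at q)"
    by (rule derivative_eq_intros d\<alpha> d\<beta> refl | simp add: fun_eq_iff power2_eq_square algebra_simps)+
  from has_derivative_real_sqrt[OF discriminant_pos[OF q] this]
  have sqrt_\<Delta>: "((\<lambda>q. sqrt (\<Delta> q)) has_derivative
      (\<lambda>v. (4 * ?d\<alpha> v - 2 * \<beta> q * ?d\<beta> v) * (inverse (sqrt (\<Delta> q)) / 2))) (at q)" .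
  have "(lam has_derivative (\<lambda>v. of_real (- ?d\<beta> v / 2) +
      \<i> * of_real ((4 * ?d\<alpha> v - 2 * \<beta> q * ?d\<beta> v) * (inverse (sqrt (\<Delta> q)) / 2) / 2))) (at q)"
    unfolding lam_eq[abs_def]
    by (rule derivative_eq_intros bounded_linear.has_derivative[OF bounded_linear_of_real] d\<beta> sqrt_\<Delta> refl
        | simp add: fun_eq_iff algebra_simps)+
  moreover have "(\<lambda>v. of_real (- ?d\<beta> v / 2) +
      \<i> * of_real ((4 * ?d\<alpha> v - 2 * \<beta> q * ?d\<beta> v) * (inverse (sqrt (\<Delta> q)) / 2) / 2)) =
      (\<lambda>v. fst v *\<^sub>R lam_x q + snd v *\<^sub>R lam_y q)"
    using discriminant_pos[OF q] by (simp add: fun_eq_iff lam_x_def lam_y_def complex_eq_iff field_simps)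
  ultimately show ?thesis
    by simp
qed

lemma complex_burgers: "q \<in> \<Omega> \<Longrightarrow> lam_x q = - lam q * lam_y q"
  using rigid pdx_pdy_has_derivative[OF has_derivative_lam_partials]
  unfolding rigid_elliptic_structure_def obstruction_def moving_unit_def
  by (simp add: eq_neg_iff_add_eq_0)

lemma has_derivative_lam:
  "q \<in> \<Omega> \<Longrightarrow> (lam has_derivative (\<lambda>v. char_form (lam q) (Complex (fst v) (snd v)) * lam_y q)) (at q)"
  using has_derivative_lam_partials[of q]
  by (simp add: complex_burgers char_form_def scaleR_conv_of_real algebra_simps)

lemma continuous_on_lam: "continuous_on \<Omega> lam"
  unfolding lam_eq[abs_def]
  using C1_on_coefficients differentiable_imp_continuous_on unfolding C1_on_def
  by (intro continuous_intros) auto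

lemma continuous_on_lam_y: "continuous_on \<Omega> lam_y"
  unfolding lam_y_def[abs_def]
  using C1_on_coefficients differentiable_imp_continuous_on discriminant_pos unfolding C1_on_def
  by (intro continuous_intros) (auto simp: less_imp_neq[symmetric])

definition cdomain :: "complex set" where
  "cdomain = {z. (Re z, Im z) \<in> \<Omega>}"

definition lam_c :: "complex \<Rightarrow> complex" where
  "lam_c z = lam (Re z, Im z)"

definition lam_y_c :: "complex \<Rightarrow> complex" where
  "lam_y_c z = lam_y (Re z, Im z)"

text \<open>Constant along each complex characteristic \<open>y - \<lambda> x = const\<close> of Burgers' equation, on which
  \<open>\<lambda>\<close> itself is constant.\<close>

definition char_coord :: "real \<Rightarrow> complex \<Rightarrow> complex" where
  "char_coord x0 z = of_real (Im z) - of_real (Re z - x0) * lam_c z"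

definition char_jac :: "real \<Rightarrow> complex \<Rightarrow> complex" where
  "char_jac x0 z = 1 - of_real (Re z - x0) * lam_y_c z"

lemma open_cdomain: "open cdomain"
proof -
  have "cdomain = (\<lambda>z. (Re z, Im z)) -` \<Omega>"
    by (auto simp: cdomain_def)
  then show ?thesis
    using open_vimage[OF open_domain linear_continuous_on[OF bounded_linear_Re_Im]] by simp
qed

lemma Im_lam_c_pos: "z \<in> cdomain \<Longrightarrow> Im (lam_c z) > 0"
  using discriminant_pos by (simp add: lam_c_def lam_eq cdomain_def)

lemma has_derivative_lam_c:
  assumes z: "z \<in> cdomain"
  shows "(lam_c has_derivative (\<lambda>v. char_form (lam_c z) v * lam_y_c z)) (at z)"
proof -
  have "(lam has_derivative (\<lambda>v. char_form (lam (Re z, Im z)) (Complex (fst v) (snd v)) * lam_y (Re z, Im z)))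
      (at ((\<lambda>z. (Re z, Im z)) z))"
    using z by (intro has_derivative_lam) (simp add: cdomain_def)
  from diff_chain_at[OF bounded_linear_imp_has_derivative[OF bounded_linear_Re_Im] this]
  show ?thesis
    by (simp add: o_def lam_c_def[abs_def] lam_y_c_def)
qed

lemma has_derivative_char_coord:
  assumes z: "z \<in> cdomain"
  shows "(char_coord x0 has_derivative (\<lambda>v. char_jac x0 z * char_form (lam_c z) v)) (at z)"
proof -
  have "(char_coord x0 has_derivative (\<lambda>v. of_real (Im v) -
      (of_real (Re z - x0) * (char_form (lam_c z) v * lam_y_c z) + of_real (Re v) * lam_c z))) (at z)"
    unfolding char_coord_def[abs_def]
    by (rule derivative_eq_intros has_derivative_lam_c[OF z]
        bounded_linear.has_derivative[OF bounded_linear_of_real] bounded_linear.has_derivative[OF bounded_linear_Re]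
        bounded_linear.has_derivative[OF bounded_linear_Im] refl | simp)+
  then show ?thesis
    by (simp add: char_jac_def char_form_def algebra_simps)
qed

lemma continuous_on_lam_c: "continuous_on cdomain lam_c"
  and continuous_on_lam_y_c: "continuous_on cdomain lam_y_c"
  unfolding lam_c_def[abs_def] lam_y_c_def[abs_def]
  by (auto simp: cdomain_def intro!: continuous_on_compose2[OF continuous_on_lam] continuous_on_compose2[OF continuous_on_lam_y]
      continuous_intros)

lemma continuous_on_char_coord: "continuous_on cdomain (char_coord x0)"
  and continuous_on_char_jac: "continuous_on cdomain (char_jac x0)"
  unfolding char_coord_def[abs_def] char_jac_def[abs_def]
  using continuous_on_lam_c continuous_on_lam_y_c by (auto intro!: continuous_intros)

lemma char_coord_locally_injective:
  assumes z0: "z0 \<in> cdomain"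
  obtains r where "r > 0" "ball z0 r \<subseteq> cdomain" "inj_on (char_coord (Re z0)) (ball z0 r)"
proof (rule has_derivative_locally_injective[OF z0 open_cdomain bounded_linear_char_form_inv,
      where f' = "\<lambda>z v. char_jac (Re z0) z * char_form (lam_c z) v"])
  show "char_form_inv (lam_c z0) \<circ> (\<lambda>v. char_jac (Re z0) z0 * char_form (lam_c z0) v) = id"
    using Im_lam_c_pos[OF z0] by (simp add: char_jac_def char_form_inv_char_form fun_eq_iff)
  show "(char_coord (Re z0) has_derivative (\<lambda>v. char_jac (Re z0) z * char_form (lam_c z) v)) (at z)"
    if "z \<in> cdomain" for z
    using that by (rule has_derivative_char_coord)
  fix e :: real assume e: "e > 0"
  define g where "g z = norm (char_jac (Re z0) z - char_jac (Re z0) z0) +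
      norm (char_jac (Re z0) z * lam_c z - char_jac (Re z0) z0 * lam_c z0)" for z
  have "continuous_on cdomain g"
    unfolding g_def[abs_def] using continuous_on_char_jac continuous_on_lam_c
    by (intro continuous_intros)
  then have "isCont g z0"
    using z0 open_cdomain continuous_on_eq_continuous_at by blast
  then obtain d where d: "d > 0" "\<And>z. dist z z0 < d \<Longrightarrow> dist (g z) (g z0) < e"
    using e unfolding continuous_at_eps_delta by blast
  have "g z0 = 0"
    by (simp add: g_def)
  then have small: "g z < e" if "dist z0 z < d" for z
    using d(2)[of z] that by (simp add: dist_commute dist_real_def)
  have "onorm (\<lambda>v. char_jac (Re z0) z * char_form (lam_c z) v -
      char_jac (Re z0) z0 * char_form (lam_c z0) v) \<le> g z" for z
    unfolding g_def by (rule onorm_char_form_diff_le)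
  with small d(1) show "\<exists>d>0. \<forall>z. dist z0 z < d \<longrightarrow> onorm (\<lambda>v. char_jac (Re z0) z * char_form (lam_c z) v -
      char_jac (Re z0) z0 * char_form (lam_c z0) v) < e"
    by (meson order.strict_trans1)
qed

lemma char_jac_nonzero_near:
  assumes z0: "z0 \<in> cdomain"
  obtains d where "d > 0" "\<And>z. z \<in> ball z0 d \<Longrightarrow> char_jac (Re z0) z \<noteq> 0"
proof -
  have "isCont (char_jac (Re z0)) z0"
    using z0 open_cdomain continuous_on_char_jac continuous_on_eq_continuous_at by blast
  moreover have "char_jac (Re z0) z0 = 1"
    by (simp add: char_jac_def)
  ultimately obtain d where d: "d > 0" "\<And>z. dist z z0 < d \<Longrightarrow> dist (char_jac (Re z0) z) 1 < 1"
    unfolding continuous_at_eps_delta by (metis zero_less_one)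
  show ?thesis
  proof (rule that[OF d(1)])
    fix z assume "z \<in> ball z0 d"
    then have "dist (char_jac (Re z0) z) 1 < 1"
      using d(2) by (simp add: dist_commute)
    then show "char_jac (Re z0) z \<noteq> 0"
      by auto
  qed
qed

lemma lam_c_holomorphic_in_char_coord:
  assumes z0: "z0 \<in> cdomain"
  obtains S F where "open S" "z0 \<in> S" "S \<subseteq> cdomain" "open (char_coord (Re z0) ` S)"
    "F holomorphic_on char_coord (Re z0) ` S" "\<And>z. z \<in> S \<Longrightarrow> F (char_coord (Re z0) z) = lam_c z"
proof -
  let ?W = "char_coord (Re z0)" and ?A = "char_jac (Re z0)"
  obtain r where r: "r > 0" "ball z0 r \<subseteq> cdomain" "inj_on ?W (ball z0 r)"
    using char_coord_locally_injective[OF z0] by blast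
  obtain d where d: "d > 0" "\<And>z. z \<in> ball z0 d \<Longrightarrow> ?A z \<noteq> 0"
    using char_jac_nonzero_near[OF z0] by blast
  define S where "S = ball z0 (min r d)"
  have S: "open S" "z0 \<in> S" "S \<subseteq> cdomain"
    using r d by (auto simp: S_def)
  have inj: "inj_on ?W S"
    using r(3) by (rule inj_on_subset) (auto simp: S_def)
  have A_nonzero: "?A z \<noteq> 0" if "z \<in> S" for z
    using d(2) that by (auto simp: S_def)
  have cont: "continuous_on S ?W"
    using continuous_on_char_coord S(3) by (rule continuous_on_subset)
  define g where "g = inv_into S ?W"
  have gW: "g (?W z) = z" if "z \<in> S" for z
    using inj that by (simp add: g_def)
  have "(lam_c \<circ> g has_field_derivative (lam_y_c z / ?A z)) (at (?W z))" if z: "z \<in> S" for z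
  proof -
    have zc: "z \<in> cdomain" and Im: "Im (lam_c z) \<noteq> 0"
      using S(3) z Im_lam_c_pos[of z] by auto
    define g' where "g' w = char_form_inv (lam_c z) (w / ?A z)" for w
    have "(g has_derivative g') (at (?W z))"
      using has_derivative_inverse_strong[OF S(1) z cont gW has_derivative_char_coord[OF zc]]
        char_form_char_form_inv[OF Im] A_nonzero[OF z]
      by (auto simp: g'_def fun_eq_iff)
    moreover have "(lam_c has_derivative (\<lambda>v. char_form (lam_c z) v * lam_y_c z)) (at (g (?W z)))"
      using gW[OF z] has_derivative_lam_c[OF zc] by simp
    ultimately have "(lam_c \<circ> g has_derivative (\<lambda>v. char_form (lam_c z) v * lam_y_c z) \<circ> g') (at (?W z))"
      by (rule diff_chain_at)
    moreover have "(\<lambda>v. char_form (lam_c z) v * lam_y_c z) \<circ> g' = (*) (lam_y_c z / ?A z)"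
      using char_form_char_form_inv[OF Im] A_nonzero[OF z] by (auto simp: g'_def fun_eq_iff)
    ultimately show ?thesis
      unfolding has_field_derivative_def by (simp only:)
  qed
  then have "lam_c \<circ> g holomorphic_on ?W ` S"
    unfolding holomorphic_on_def field_differentiable_def
    by (blast intro: has_field_derivative_at_within)
  moreover have "open (?W ` S)"
    using cont S(1) inj by (rule invariance_of_domain)
  ultimately show ?thesis
    using that S gW by simp
qed

lemma local_power_series_lam:
  assumes p0: "(x0, y0) \<in> \<Omega>"
  obtains \<delta> a where "\<delta> > 0" "ball (x0, y0) \<delta> \<subseteq> \<Omega>"
    "\<And>q. q \<in> ball (x0, y0) \<delta> \<Longrightarrow> power_series2_abs_sums a (fst q - x0) (snd q - y0) (lam q)"
proof -
  define z0 where "z0 = Complex x0 y0"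
  have z0: "z0 \<in> cdomain"
    using p0 by (simp add: cdomain_def z0_def)
  obtain S F where S: "open S" "z0 \<in> S" "S \<subseteq> cdomain" and V: "open (char_coord x0 ` S)"
    and holF: "F holomorphic_on char_coord x0 ` S" and F: "\<And>z. z \<in> S \<Longrightarrow> F (char_coord x0 z) = lam_c z"
    using lam_c_holomorphic_in_char_coord[OF z0] by (auto simp: z0_def)
  define c where "c = char_coord x0 z0"
  have c: "c = of_real y0"
    by (simp add: c_def char_coord_def z0_def)
  obtain r where r: "r > 0" "cball c r \<subseteq> char_coord x0 ` S"
    using V S(2) open_contains_cball by (metis c_def imageI)
  obtain \<rho> where \<rho>: "\<rho> > 0" and series: "\<And>u s w. \<bar>u\<bar> < \<rho> \<Longrightarrow> \<bar>s\<bar> < \<rho> \<Longrightarrow> w \<in> ball c r \<Longrightarrow>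
      w - c - of_real s + of_real u * F w = 0 \<Longrightarrow> power_series2_abs_sums (implicit_root_coeff F c r) u s (F w)"
    using implicit_root_power_series[OF holF V r(2,1)] by blast
  have "isCont (char_coord x0) z0"
    using z0 open_cdomain continuous_on_char_coord continuous_on_eq_continuous_at by blast
  then obtain d1 where d1: "d1 > 0" "\<And>z. dist z z0 < d1 \<Longrightarrow> dist (char_coord x0 z) c < r"
    using r(1) unfolding continuous_at_eps_delta c_def by blast
  obtain d2 where d2: "d2 > 0" "ball z0 d2 \<subseteq> S"
    using S(1,2) open_contains_ball by blast
  define \<delta> where "\<delta> = min (min d1 d2) \<rho>"
  have q: "q \<in> \<Omega> \<and> power_series2_abs_sums (implicit_root_coeff F c r) (fst q - x0) (snd q - y0) (lam q)"
    if "q \<in> ball (x0, y0) \<delta>" for q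
  proof -
    define z where "z = Complex (fst q) (snd q)"
    have dist_q: "dist z z0 < \<delta>"
      using that by (simp add: z_def z0_def dist_Complex dist_commute)
    have "z \<in> S"
      using dist_q d2(2) by (auto simp: \<delta>_def dist_commute)
    then have "q \<in> \<Omega>" and Fz: "F (char_coord x0 z) = lam q"
      using S(3) F by (auto simp: cdomain_def z_def lam_c_def)
    have "\<bar>fst q - x0\<bar> < \<rho>" "\<bar>snd q - y0\<bar> < \<rho>"
      using dist_q dist_fst_le[of q "(x0, y0)"] dist_snd_le[of q "(x0, y0)"] that
      by (auto simp: \<delta>_def dist_real_def dist_commute)
    moreover have "char_coord x0 z \<in> ball c r"
      using d1(2) dist_q by (auto simp: \<delta>_def dist_commute)
    moreover have "char_coord x0 z - c - of_real (snd q - y0) + of_real (fst q - x0) * F (char_coord x0 z) = 0"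
      using Fz by (simp add: char_coord_def c z_def lam_c_def)
    ultimately show ?thesis
      using series Fz \<open>q \<in> \<Omega>\<close> by metis
  qed
  show ?thesis
  proof
    show "\<delta> > 0"
      using d1 d2 \<rho> by (simp add: \<delta>_def)
  qed (use q in auto)
qed


lemma abs_real_analytic_on2_lam: "abs_real_analytic_on2 \<Omega> lam"
  unfolding abs_real_analytic_on2_def
proof
  fix p assume "p \<in> \<Omega>"
  then obtain \<delta> a where "\<delta> > 0" "ball p \<delta> \<subseteq> \<Omega>"
    "\<And>q. q \<in> ball p \<delta> \<Longrightarrow> power_series2_abs_sums a (fst q - fst p) (snd q - snd p) (lam q)"
    using local_power_series_lam[of "fst p" "snd p"] by auto
  then show "\<exists>r>0. ball p r \<subseteq> \<Omega> \<and> (\<exists>c. \<forall>q\<in>ball p r. power_series2_abs_sums c (fst q - fst p) (snd q - snd p) (lam q))"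
    by blast
qed

end

theorem corollary2p6:
  fixes \<Omega> :: "(real \<times> real) set" and \<alpha> \<beta> :: "real \<times> real \<Rightarrow> real"
  assumes "domain2 \<Omega>"
    and "rigid_elliptic_structure \<Omega> \<alpha> \<beta>"
  shows "real_analytic_on2 \<Omega> \<alpha> \<and> real_analytic_on2 \<Omega> \<beta> \<and>
         real_analytic_on2 \<Omega> (spectral_param \<alpha> \<beta>)"
proof -
  interpret rigid_structure \<Omega> \<alpha> \<beta>
    using assms by unfold_locales (simp_all add: domain2_def)
  have lam: "abs_real_analytic_on2 \<Omega> lam"
    by (rule abs_real_analytic_on2_lam)
  have Re: "abs_real_analytic_on2 \<Omega> (\<lambda>q. Re (lam q))" and Im: "abs_real_analytic_on2 \<Omega> (\<lambda>q. Im (lam q))"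
    using lam by (auto intro: abs_real_analytic_on2_bounded_linear bounded_linear_Re bounded_linear_Im)
  have "abs_real_analytic_on2 \<Omega> \<beta>"
  proof (rule abs_real_analytic_on2_cong)
    show "abs_real_analytic_on2 \<Omega> (\<lambda>q. -2 * Re (lam q))"
      using Re by (rule abs_real_analytic_on2_bounded_linear[OF bounded_linear_mult_right])
  qed (simp add: spectral_param_def)
  moreover have "abs_real_analytic_on2 \<Omega> \<alpha>"
  proof (rule abs_real_analytic_on2_cong)
    show "abs_real_analytic_on2 \<Omega> (\<lambda>q. Re (lam q) * Re (lam q) + Im (lam q) * Im (lam q))"
      using Re Im by (intro abs_real_analytic_on2_add abs_real_analytic_on2_mult)
    show "Re (lam q) * Re (lam q) + Im (lam q) * Im (lam q) = \<alpha> q" if "q \<in> \<Omega>" for q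
      using discriminant_pos[OF that] by (simp add: spectral_param_def power2_eq_square field_simps)
  qed
  ultimately show ?thesis
    using lam by (auto intro: abs_real_analytic_on2_imp_real_analytic_on2)
qed

end
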